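(* Let $R \subseteq T$ be commutative rings and let $I$ be an ideal of $R$ with $IT = I$ (so $I$ is also an ideal of $T$). Let $W$ be a multiplicatively closed subset of $T$, put $V = W \cap R$, and suppose $I \cap W \neq \emptyset$. Then the natural map $R_V \to T_W$ is an isomorphism. *)

theory Defs
  imports "HOL-Algebra.Algebra"
begin

definition mult_closed :: "('a, 'm) ring_scheme \<Rightarrow> 'a set \<Rightarrow> bool" where
  "mult_closed A S \<longleftrightarrow> S \<subseteq> carrier A \<and> \<one>\<^bsub>A\<^esub> \<in> S \<and>
     (\<forall>s\<in>S. \<forall>t\<in>S. s \<otimes>\<^bsub>A\<^esub> t \<in> S)"

definition loc_rel :: "('a, 'm) ring_scheme \<Rightarrow> 'a set \<Rightarrow> (('a * 'a) * ('a * 'a)) set" where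
  "loc_rel A S = {((a, s), (a', s')). a \<in> carrier A \<and> s \<in> S \<and> a' \<in> carrier A \<and> s' \<in> S \<and>
     (\<exists>u\<in>S. u \<otimes>\<^bsub>A\<^esub> ((a \<otimes>\<^bsub>A\<^esub> s') \<ominus>\<^bsub>A\<^esub> (a' \<otimes>\<^bsub>A\<^esub> s)) = \<zero>\<^bsub>A\<^esub>)}"

definition loc_class :: "('a, 'm) ring_scheme \<Rightarrow> 'a set \<Rightarrow> 'a \<Rightarrow> 'a \<Rightarrow> ('a * 'a) set" where
  "loc_class A S a s = loc_rel A S `` {(a, s)}"

definition loc_rep :: "('a * 'a) set \<Rightarrow> 'a * 'a" where
  "loc_rep P = (SOME p. p \<in> P)"

definition loc_mult :: "('a, 'm) ring_scheme \<Rightarrow> 'a set \<Rightarrow> ('a * 'a) set \<Rightarrow> ('a * 'a) set \<Rightarrow> ('a * 'a) set" where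
  "loc_mult A S P Q = loc_class A S (fst (loc_rep P) \<otimes>\<^bsub>A\<^esub> fst (loc_rep Q))
                                    (snd (loc_rep P) \<otimes>\<^bsub>A\<^esub> snd (loc_rep Q))"

definition loc_add :: "('a, 'm) ring_scheme \<Rightarrow> 'a set \<Rightarrow> ('a * 'a) set \<Rightarrow> ('a * 'a) set \<Rightarrow> ('a * 'a) set" where
  "loc_add A S P Q = loc_class A S
      ((fst (loc_rep P) \<otimes>\<^bsub>A\<^esub> snd (loc_rep Q)) \<oplus>\<^bsub>A\<^esub> (fst (loc_rep Q) \<otimes>\<^bsub>A\<^esub> snd (loc_rep P)))
      (snd (loc_rep P) \<otimes>\<^bsub>A\<^esub> snd (loc_rep Q))"

definition localization :: "('a, 'm) ring_scheme \<Rightarrow> 'a set \<Rightarrow> ('a * 'a) set ring" where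
  "localization A S =
     \<lparr> carrier = (Sigma (carrier A) (\<lambda>_. S)) // loc_rel A S,
       monoid.mult = loc_mult A S,
       one = loc_class A S \<one>\<^bsub>A\<^esub> \<one>\<^bsub>A\<^esub>,
       ring.zero = loc_class A S \<zero>\<^bsub>A\<^esub> \<one>\<^bsub>A\<^esub>,
       ring.add = loc_add A S \<rparr>"

text \<open>The natural map R_V \<rightarrow> T_W for R \<subseteq> T and V \<subseteq> W: the class of (r,v) is
  sent to the class of (r,v); on a class P this is the image of P under ~_W.\<close>
definition loc_nat_map :: "('a, 'm) ring_scheme \<Rightarrow> 'a set \<Rightarrow> ('a * 'a) set \<Rightarrow> ('a * 'a) set" where
  "loc_nat_map T W P = loc_rel T W `` P"

end

theory Submission
  imports Defs
begin

text \<open>If some \<open>c \<in> W\<close> lies in the conductor of \<open>R\<close> in \<open>T\<close>, i.e. \<open>T c \<subseteq> R\<close>, then every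
  fraction \<open>a/s\<close> of \<open>T\<^sub>W\<close> equals \<open>(a c)/(s c)\<close> with numerator in \<open>R\<close> and denominator in
  \<open>V = W \<inter> R\<close>, which gives surjectivity; and a relation \<open>u (a t - b s) = 0\<close> with \<open>u \<in> W\<close> can be
  multiplied by \<open>c\<close> to obtain a witness \<open>u c \<in> V\<close>, which gives injectivity. Elements of
  \<open>I \<inter> W\<close> are such conductor elements since \<open>I\<close> is an ideal of \<open>T\<close> contained in \<open>R\<close>.\<close>

lemma mult_closedD:
  assumes "mult_closed A S"
  shows "S \<subseteq> carrier A" "\<one>\<^bsub>A\<^esub> \<in> S" "\<And>s t. s \<in> S \<Longrightarrow> t \<in> S \<Longrightarrow> s \<otimes>\<^bsub>A\<^esub> t \<in> S"
  using assms unfolding mult_closed_def by auto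

lemma (in cring) loc_rel_iff:
  assumes "S \<subseteq> carrier R"
  shows "((a, s), (a', s')) \<in> loc_rel R S \<longleftrightarrow>
    a \<in> carrier R \<and> s \<in> S \<and> a' \<in> carrier R \<and> s' \<in> S \<and> (\<exists>u\<in>S. u \<otimes> a \<otimes> s' = u \<otimes> a' \<otimes> s)"
proof -
  have "u \<otimes> ((a \<otimes> s') \<ominus> (a' \<otimes> s)) = \<zero> \<longleftrightarrow> u \<otimes> a \<otimes> s' = u \<otimes> a' \<otimes> s"
    if "u \<in> carrier R" "a \<in> carrier R" "s \<in> carrier R" "a' \<in> carrier R" "s' \<in> carrier R" for u
  proof -
    have "u \<otimes> ((a \<otimes> s') \<ominus> (a' \<otimes> s)) = (u \<otimes> a \<otimes> s') \<ominus> (u \<otimes> a' \<otimes> s)"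
      using that by algebra
    thus ?thesis using that by simp
  qed
  thus ?thesis unfolding loc_rel_def using assms by blast
qed

lemma (in cring) loc_rel_trans:
  assumes S: "mult_closed R S"
    and xy: "((a, s), (a', s')) \<in> loc_rel R S" and yz: "((a', s'), (a'', s'')) \<in> loc_rel R S"
  shows "((a, s), (a'', s'')) \<in> loc_rel R S"
proof -
  note S = mult_closedD[OF S]
  note iff = loc_rel_iff[OF S(1)]
  from xy yz obtain u v where c: "a \<in> carrier R" "s \<in> S" "a' \<in> carrier R" "s' \<in> S"
      "a'' \<in> carrier R" "s'' \<in> S" "u \<in> S" "v \<in> S"
    and h1: "u \<otimes> a \<otimes> s' = u \<otimes> a' \<otimes> s" and h2: "v \<otimes> a' \<otimes> s'' = v \<otimes> a'' \<otimes> s'"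
    unfolding iff by blast
  have cc: "s \<in> carrier R" "s' \<in> carrier R" "s'' \<in> carrier R" "u \<in> carrier R" "v \<in> carrier R"
    using c S(1) by auto
  have "(u \<otimes> v \<otimes> s') \<otimes> a \<otimes> s'' = (v \<otimes> s'') \<otimes> (u \<otimes> a \<otimes> s')"
    using c cc by (simp add: m_ac)
  also have "\<dots> = (v \<otimes> s'') \<otimes> (u \<otimes> a' \<otimes> s)" by (simp add: h1)
  also have "\<dots> = (u \<otimes> s) \<otimes> (v \<otimes> a' \<otimes> s'')" using c cc by (simp add: m_ac)
  also have "\<dots> = (u \<otimes> s) \<otimes> (v \<otimes> a'' \<otimes> s')" by (simp add: h2)
  also have "\<dots> = (u \<otimes> v \<otimes> s') \<otimes> a'' \<otimes> s" using c cc by (simp add: m_ac)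
  finally have "(u \<otimes> v \<otimes> s') \<otimes> a \<otimes> s'' = (u \<otimes> v \<otimes> s') \<otimes> a'' \<otimes> s" .
  moreover have "u \<otimes> v \<otimes> s' \<in> S" using S c by auto
  ultimately show ?thesis
    unfolding iff using c by blast
qed

lemma (in cring) loc_rel_equiv:
  assumes "mult_closed R S"
  shows "equiv (Sigma (carrier R) (\<lambda>_. S)) (loc_rel R S)"
proof (rule equivI)
  note S = mult_closedD[OF assms]
  note iff = loc_rel_iff[OF S(1)]
  show "loc_rel R S \<subseteq> Sigma (carrier R) (\<lambda>_. S) \<times> Sigma (carrier R) (\<lambda>_. S)"
    unfolding loc_rel_def by auto
  show "refl_on (Sigma (carrier R) (\<lambda>_. S)) (loc_rel R S)"
    by (rule refl_onI) (use iff S in auto)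
  show "sym (loc_rel R S)"
  proof (rule symI)
    fix x y assume "(x, y) \<in> loc_rel R S"
    then show "(y, x) \<in> loc_rel R S"
      by (cases x, cases y) (simp only: iff, metis)
  qed
  show "trans (loc_rel R S)"
  proof (rule transI)
    fix x y z assume "(x, y) \<in> loc_rel R S" "(y, z) \<in> loc_rel R S"
    then show "(x, z) \<in> loc_rel R S"
      by (cases x, cases y, cases z) (simp only: loc_rel_trans[OF assms])
  qed
qed

lemma (in cring) loc_class_eq_iff:
  assumes "mult_closed R S" "a \<in> carrier R" "s \<in> S"
  shows "loc_class R S a s = loc_class R S b t \<longleftrightarrow> ((a, s), (b, t)) \<in> loc_rel R S"
  unfolding loc_class_def
proof
  note E = loc_rel_equiv[OF assms(1)]
  assume "loc_rel R S `` {(a, s)} = loc_rel R S `` {(b, t)}"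
  moreover have "(a, s) \<in> loc_rel R S `` {(a, s)}"
    using equiv_class_self[OF E] assms(2,3) by simp
  ultimately have "((b, t), (a, s)) \<in> loc_rel R S" by simp
  then show "((a, s), (b, t)) \<in> loc_rel R S"
    using E unfolding equiv_def by (blast dest: symD)
next
  assume "((a, s), (b, t)) \<in> loc_rel R S"
  then show "loc_rel R S `` {(a, s)} = loc_rel R S `` {(b, t)}"
    by (rule equiv_class_eq[OF loc_rel_equiv[OF assms(1)]])
qed

lemma (in cring) loc_rel_mult:
  assumes S: "mult_closed R S"
    and r1: "((a, s), (a', s')) \<in> loc_rel R S" and r2: "((b, t), (b', t')) \<in> loc_rel R S"
  shows "((a \<otimes> b, s \<otimes> t), (a' \<otimes> b', s' \<otimes> t')) \<in> loc_rel R S"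
proof -
  note S = mult_closedD[OF S]
  note iff = loc_rel_iff[OF S(1)]
  from r1 r2 obtain u v where c: "a \<in> carrier R" "s \<in> S" "a' \<in> carrier R" "s' \<in> S"
      "b \<in> carrier R" "t \<in> S" "b' \<in> carrier R" "t' \<in> S" "u \<in> S" "v \<in> S"
    and h1: "u \<otimes> a \<otimes> s' = u \<otimes> a' \<otimes> s" and h2: "v \<otimes> b \<otimes> t' = v \<otimes> b' \<otimes> t"
    unfolding iff by blast
  have cc: "s \<in> carrier R" "s' \<in> carrier R" "t \<in> carrier R" "t' \<in> carrier R"
      "u \<in> carrier R" "v \<in> carrier R"
    using c S(1) by auto
  have "(u \<otimes> v) \<otimes> (a \<otimes> b) \<otimes> (s' \<otimes> t') = (u \<otimes> a \<otimes> s') \<otimes> (v \<otimes> b \<otimes> t')"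
    using c cc by (simp add: m_ac)
  also have "\<dots> = (u \<otimes> a' \<otimes> s) \<otimes> (v \<otimes> b' \<otimes> t)" by (simp add: h1 h2)
  also have "\<dots> = (u \<otimes> v) \<otimes> (a' \<otimes> b') \<otimes> (s \<otimes> t)" using c cc by (simp add: m_ac)
  finally have "(u \<otimes> v) \<otimes> (a \<otimes> b) \<otimes> (s' \<otimes> t') = (u \<otimes> v) \<otimes> (a' \<otimes> b') \<otimes> (s \<otimes> t)" .
  moreover have "u \<otimes> v \<in> S" "s \<otimes> t \<in> S" "s' \<otimes> t' \<in> S" using S c by auto
  ultimately show ?thesis
    unfolding iff using c by blast
qed

lemma (in cring) loc_rel_add:
  assumes S: "mult_closed R S"
    and r1: "((a, s), (a', s')) \<in> loc_rel R S" and r2: "((b, t), (b', t')) \<in> loc_rel R S"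
  shows "((a \<otimes> t \<oplus> b \<otimes> s, s \<otimes> t), (a' \<otimes> t' \<oplus> b' \<otimes> s', s' \<otimes> t')) \<in> loc_rel R S"
proof -
  note S = mult_closedD[OF S]
  note iff = loc_rel_iff[OF S(1)]
  from r1 r2 obtain u v where c: "a \<in> carrier R" "s \<in> S" "a' \<in> carrier R" "s' \<in> S"
      "b \<in> carrier R" "t \<in> S" "b' \<in> carrier R" "t' \<in> S" "u \<in> S" "v \<in> S"
    and h1: "u \<otimes> a \<otimes> s' = u \<otimes> a' \<otimes> s" and h2: "v \<otimes> b \<otimes> t' = v \<otimes> b' \<otimes> t"
    unfolding iff by blast
  have cc: "s \<in> carrier R" "s' \<in> carrier R" "t \<in> carrier R" "t' \<in> carrier R"
      "u \<in> carrier R" "v \<in> carrier R"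
    using c S(1) by auto
  have "(u \<otimes> v) \<otimes> (a \<otimes> t \<oplus> b \<otimes> s) \<otimes> (s' \<otimes> t')
      = (v \<otimes> t \<otimes> t') \<otimes> (u \<otimes> a \<otimes> s') \<oplus> (u \<otimes> s \<otimes> s') \<otimes> (v \<otimes> b \<otimes> t')"
    using c cc by algebra
  also have "\<dots> = (v \<otimes> t \<otimes> t') \<otimes> (u \<otimes> a' \<otimes> s) \<oplus> (u \<otimes> s \<otimes> s') \<otimes> (v \<otimes> b' \<otimes> t)"
    by (simp add: h1 h2)
  also have "\<dots> = (u \<otimes> v) \<otimes> (a' \<otimes> t' \<oplus> b' \<otimes> s') \<otimes> (s \<otimes> t)"
    using c cc by algebra
  finally have "(u \<otimes> v) \<otimes> (a \<otimes> t \<oplus> b \<otimes> s) \<otimes> (s' \<otimes> t')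
    = (u \<otimes> v) \<otimes> (a' \<otimes> t' \<oplus> b' \<otimes> s') \<otimes> (s \<otimes> t)" .
  moreover have "u \<otimes> v \<in> S" "s \<otimes> t \<in> S" "s' \<otimes> t' \<in> S" using S c by auto
  ultimately show ?thesis
    unfolding iff using c cc by blast
qed

lemma (in cring) loc_rel_loc_rep:
  assumes "mult_closed R S" "a \<in> carrier R" "s \<in> S"
  shows "((a, s), loc_rep (loc_class R S a s)) \<in> loc_rel R S"
proof -
  have "(a, s) \<in> loc_class R S a s"
    unfolding loc_class_def using equiv_class_self[OF loc_rel_equiv[OF assms(1)]] assms by auto
  hence "loc_rep (loc_class R S a s) \<in> loc_class R S a s"
    unfolding loc_rep_def by (rule someI)
  thus ?thesis unfolding loc_class_def by auto
qed

lemma (in cring) loc_mult_loc_class: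
  assumes "mult_closed R S" "a \<in> carrier R" "s \<in> S" "b \<in> carrier R" "t \<in> S"
  shows "loc_mult R S (loc_class R S a s) (loc_class R S b t) = loc_class R S (a \<otimes> b) (s \<otimes> t)"
proof -
  obtain a' s' where p: "loc_rep (loc_class R S a s) = (a', s')" by fastforce
  obtain b' t' where q: "loc_rep (loc_class R S b t) = (b', t')" by fastforce
  have "((a \<otimes> b, s \<otimes> t), (a' \<otimes> b', s' \<otimes> t')) \<in> loc_rel R S"
    using loc_rel_mult assms loc_rel_loc_rep p q by metis
  then show ?thesis
    unfolding loc_mult_def p q fst_conv snd_conv
    using loc_class_eq_iff assms by (metis m_closed mult_closedD(1,3) subsetD)
qed

lemma (in cring) loc_add_loc_class:
  assumes "mult_closed R S" "a \<in> carrier R" "s \<in> S" "b \<in> carrier R" "t \<in> S"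
  shows "loc_add R S (loc_class R S a s) (loc_class R S b t)
    = loc_class R S (a \<otimes> t \<oplus> b \<otimes> s) (s \<otimes> t)"
proof -
  obtain a' s' where p: "loc_rep (loc_class R S a s) = (a', s')" by fastforce
  obtain b' t' where q: "loc_rep (loc_class R S b t) = (b', t')" by fastforce
  have "((a \<otimes> t \<oplus> b \<otimes> s, s \<otimes> t), (a' \<otimes> t' \<oplus> b' \<otimes> s', s' \<otimes> t')) \<in> loc_rel R S"
    using loc_rel_add assms loc_rel_loc_rep p q by metis
  moreover have "a \<otimes> t \<oplus> b \<otimes> s \<in> carrier R" "s \<otimes> t \<in> S"
    using assms mult_closedD[OF assms(1)] by auto
  ultimately show ?thesis
    unfolding loc_add_def p q fst_conv snd_conv using loc_class_eq_iff assms(1) by metis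
qed

lemma carrier_localization_iff:
  "P \<in> carrier (localization A S) \<longleftrightarrow> (\<exists>a\<in>carrier A. \<exists>s\<in>S. P = loc_class A S a s)"
  unfolding localization_def loc_class_def quotient_def by auto

definition conductor :: "('a, 'm) ring_scheme \<Rightarrow> 'a set \<Rightarrow> 'a set" where
  "conductor T R = {c \<in> carrier T. \<forall>t\<in>carrier T. t \<otimes>\<^bsub>T\<^esub> c \<in> R}"

lemma ideal_subset_conductor:
  assumes "ideal I T" "I \<subseteq> R"
  shows "I \<subseteq> conductor T R"
  using assms ideal.I_l_closed[OF assms(1)] additive_subgroup.a_subset[OF ideal.axioms(1)[OF assms(1)]]
  unfolding conductor_def by blast

locale ring_extension_localization = cring T for T (structure) +
  fixes R W V :: "'a set"
  assumes subring: "subring R T"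
    and W_mult_closed: "mult_closed T W"
    and V_mult_closed: "mult_closed (T\<lparr>carrier := R\<rparr>) V"
    and V_subset_W: "V \<subseteq> W"
begin

lemma R_subset: "R \<subseteq> carrier T"
  using subring by (rule subringE(1))

sublocale sub: cring "T\<lparr>carrier := R\<rparr>"
  using subcring_iff[OF R_subset] subcringI'[OF subring] by simp

lemma V_subset: "V \<subseteq> R"
  using mult_closedD(1)[OF V_mult_closed] by simp

lemma W_subset: "W \<subseteq> carrier T"
  using mult_closedD(1)[OF W_mult_closed] .

lemma sub_loc_rel_iff:
  "((a, s), (a', s')) \<in> loc_rel (T\<lparr>carrier := R\<rparr>) V \<longleftrightarrow>
    a \<in> R \<and> s \<in> V \<and> a' \<in> R \<and> s' \<in> V \<and> (\<exists>u\<in>V. u \<otimes> a \<otimes> s' = u \<otimes> a' \<otimes> s)"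
  using sub.loc_rel_iff[of V] V_subset by simp

lemma loc_rel_subset: "loc_rel (T\<lparr>carrier := R\<rparr>) V \<subseteq> loc_rel T W"
proof (rule subrelI)
  fix x y assume "(x, y) \<in> loc_rel (T\<lparr>carrier := R\<rparr>) V"
  then show "(x, y) \<in> loc_rel T W"
    using V_subset_W R_subset
    by (cases x, cases y) (simp only: sub_loc_rel_iff loc_rel_iff[OF W_subset], blast)
qed

lemma loc_nat_map_loc_class:
  assumes "a \<in> R" "s \<in> V"
  shows "loc_nat_map T W (loc_class (T\<lparr>carrier := R\<rparr>) V a s) = loc_class T W a s"
proof
  have "loc_rel T W `` loc_class (T\<lparr>carrier := R\<rparr>) V a s \<subseteq> loc_rel T W `` loc_class T W a s"
    using loc_rel_subset unfolding loc_class_def by blast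
  also have "\<dots> \<subseteq> loc_class T W a s"
    using loc_rel_equiv[OF W_mult_closed] unfolding loc_class_def equiv_def trans_def by blast
  finally show "loc_nat_map T W (loc_class (T\<lparr>carrier := R\<rparr>) V a s) \<subseteq> loc_class T W a s"
    unfolding loc_nat_map_def .
  have "(a, s) \<in> loc_class (T\<lparr>carrier := R\<rparr>) V a s"
    unfolding loc_class_def using equiv_class_self[OF sub.loc_rel_equiv[OF V_mult_closed]] assms
    by simp
  then show "loc_class T W a s \<subseteq> loc_nat_map T W (loc_class (T\<lparr>carrier := R\<rparr>) V a s)"
    unfolding loc_nat_map_def loc_class_def by blast
qed

lemma sub_carrier_localization_iff:
  "P \<in> carrier (localization (T\<lparr>carrier := R\<rparr>) V) \<longleftrightarrow>
    (\<exists>a\<in>R. \<exists>s\<in>V. P = loc_class (T\<lparr>carrier := R\<rparr>) V a s)"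
  using carrier_localization_iff[of P "T\<lparr>carrier := R\<rparr>" V] by simp

lemma loc_nat_map_ring_hom:
  "loc_nat_map T W \<in> ring_hom (localization (T\<lparr>carrier := R\<rparr>) V) (localization T W)"
proof (rule ring_hom_memI)
  fix P assume "P \<in> carrier (localization (T\<lparr>carrier := R\<rparr>) V)"
  then obtain a s where "a \<in> R" "s \<in> V" "P = loc_class (T\<lparr>carrier := R\<rparr>) V a s"
    using sub_carrier_localization_iff by blast
  moreover have "a \<in> carrier T" "s \<in> W" using \<open>a \<in> R\<close> \<open>s \<in> V\<close> R_subset V_subset_W by auto
  ultimately show "loc_nat_map T W P \<in> carrier (localization T W)"
    unfolding carrier_localization_iff[of _ T] by (auto simp: loc_nat_map_loc_class)
next
  fix P Q assume "P \<in> carrier (localization (T\<lparr>carrier := R\<rparr>) V)"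
    "Q \<in> carrier (localization (T\<lparr>carrier := R\<rparr>) V)"
  then obtain a s b t where rep: "a \<in> R" "s \<in> V" "P = loc_class (T\<lparr>carrier := R\<rparr>) V a s"
    "b \<in> R" "t \<in> V" "Q = loc_class (T\<lparr>carrier := R\<rparr>) V b t"
    unfolding sub_carrier_localization_iff by blast
  have cT: "a \<in> carrier T" "s \<in> W" "b \<in> carrier T" "t \<in> W"
    using rep R_subset V_subset_W by auto
  have "s \<in> R" "t \<in> R" using rep V_subset by auto
  then have closed: "a \<otimes> b \<in> R" "a \<otimes> t \<oplus> b \<otimes> s \<in> R" "s \<otimes> t \<in> V"
    using rep subringE(6,7)[OF subring] mult_closedD(3)[OF V_mult_closed] by auto
  have "P \<otimes>\<^bsub>localization (T\<lparr>carrier := R\<rparr>) V\<^esub> Q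
      = loc_class (T\<lparr>carrier := R\<rparr>) V (a \<otimes> b) (s \<otimes> t)"
    using sub.loc_mult_loc_class[OF V_mult_closed, of a s b t] rep by (simp add: localization_def)
  then show "loc_nat_map T W (P \<otimes>\<^bsub>localization (T\<lparr>carrier := R\<rparr>) V\<^esub> Q) =
      loc_nat_map T W P \<otimes>\<^bsub>localization T W\<^esub> loc_nat_map T W Q"
    using loc_mult_loc_class[OF W_mult_closed cT] rep closed
    by (simp add: loc_nat_map_loc_class localization_def)
  have "P \<oplus>\<^bsub>localization (T\<lparr>carrier := R\<rparr>) V\<^esub> Q
      = loc_class (T\<lparr>carrier := R\<rparr>) V (a \<otimes> t \<oplus> b \<otimes> s) (s \<otimes> t)"
    using sub.loc_add_loc_class[OF V_mult_closed, of a s b t] rep by (simp add: localization_def)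
  then show "loc_nat_map T W (P \<oplus>\<^bsub>localization (T\<lparr>carrier := R\<rparr>) V\<^esub> Q) =
      loc_nat_map T W P \<oplus>\<^bsub>localization T W\<^esub> loc_nat_map T W Q"
    using loc_add_loc_class[OF W_mult_closed cT] rep closed
    by (simp add: loc_nat_map_loc_class localization_def)
next
  show "loc_nat_map T W \<one>\<^bsub>localization (T\<lparr>carrier := R\<rparr>) V\<^esub> = \<one>\<^bsub>localization T W\<^esub>"
    using loc_nat_map_loc_class[OF subringE(3)[OF subring]] mult_closedD(2)[OF V_mult_closed]
    by (simp add: localization_def)
qed

context
  fixes c
  assumes V_eq: "V = W \<inter> R" and c_in_W: "c \<in> W" and c_conductor: "c \<in> conductor T R"
begin

lemma mult_conductor_in_R: "t \<in> carrier T \<Longrightarrow> t \<otimes> c \<in> R"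
  using c_conductor unfolding conductor_def by blast

lemma mult_conductor_in_V: "w \<in> W \<Longrightarrow> w \<otimes> c \<in> V"
  using V_eq c_in_W mult_closedD(3)[OF W_mult_closed] mult_conductor_in_R W_subset by blast

lemma loc_nat_map_inj_on:
  "inj_on (loc_nat_map T W) (carrier (localization (T\<lparr>carrier := R\<rparr>) V))"
proof (rule inj_onI)
  fix P Q assume "P \<in> carrier (localization (T\<lparr>carrier := R\<rparr>) V)"
    "Q \<in> carrier (localization (T\<lparr>carrier := R\<rparr>) V)"
    and images_eq: "loc_nat_map T W P = loc_nat_map T W Q"
  then obtain a s b t where rep: "a \<in> R" "s \<in> V" "P = loc_class (T\<lparr>carrier := R\<rparr>) V a s"
    "b \<in> R" "t \<in> V" "Q = loc_class (T\<lparr>carrier := R\<rparr>) V b t"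
    unfolding sub_carrier_localization_iff by blast
  have cT: "a \<in> carrier T" "s \<in> carrier T" "b \<in> carrier T" "t \<in> carrier T" "s \<in> W"
    using rep R_subset V_subset V_subset_W by auto
  have "loc_class T W a s = loc_class T W b t"
    using images_eq rep by (simp add: loc_nat_map_loc_class)
  then obtain u where u: "u \<in> W" "u \<otimes> a \<otimes> t = u \<otimes> b \<otimes> s"
    using loc_class_eq_iff[OF W_mult_closed cT(1,5)] loc_rel_iff[OF W_subset] by blast
  have uc: "u \<in> carrier T" "c \<in> carrier T" using u c_in_W W_subset by auto
  have "(u \<otimes> c) \<otimes> a \<otimes> t = c \<otimes> (u \<otimes> a \<otimes> t)"
    using uc cT by (simp add: m_ac)
  also have "\<dots> = (u \<otimes> c) \<otimes> b \<otimes> s"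
    using u uc cT by (simp add: m_ac)
  finally have "((a, s), (b, t)) \<in> loc_rel (T\<lparr>carrier := R\<rparr>) V"
    unfolding sub_loc_rel_iff using rep mult_conductor_in_V[OF u(1)] by blast
  then show "P = Q"
    using rep sub.loc_class_eq_iff[OF V_mult_closed] by simp
qed

lemma loc_nat_map_surj:
  "loc_nat_map T W ` carrier (localization (T\<lparr>carrier := R\<rparr>) V) = carrier (localization T W)"
proof
  show "loc_nat_map T W ` carrier (localization (T\<lparr>carrier := R\<rparr>) V) \<subseteq> carrier (localization T W)"
    using loc_nat_map_ring_hom unfolding ring_hom_def by auto
next
  show "carrier (localization T W) \<subseteq> loc_nat_map T W ` carrier (localization (T\<lparr>carrier := R\<rparr>) V)"
  proof
    fix P assume "P \<in> carrier (localization T W)"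
    then obtain a s where rep: "a \<in> carrier T" "s \<in> W" "P = loc_class T W a s"
      unfolding carrier_localization_iff by blast
    have cT: "s \<in> carrier T" "c \<in> carrier T" using rep c_in_W W_subset by auto
    have ac: "a \<otimes> c \<in> R" and sc: "s \<otimes> c \<in> V"
      using mult_conductor_in_R[OF rep(1)] mult_conductor_in_V[OF rep(2)] .
    have "\<one> \<otimes> a \<otimes> (s \<otimes> c) = \<one> \<otimes> (a \<otimes> c) \<otimes> s"
      using rep cT by (simp add: m_ac)
    then have "((a, s), (a \<otimes> c, s \<otimes> c)) \<in> loc_rel T W"
      unfolding loc_rel_iff[OF W_subset]
      using ac sc rep R_subset V_subset_W mult_closedD(2)[OF W_mult_closed] by blast
    then have "P = loc_nat_map T W (loc_class (T\<lparr>carrier := R\<rparr>) V (a \<otimes> c) (s \<otimes> c))"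
      using rep ac sc R_subset V_subset_W loc_class_eq_iff[OF W_mult_closed]
      by (auto simp: loc_nat_map_loc_class)
    moreover have "loc_class (T\<lparr>carrier := R\<rparr>) V (a \<otimes> c) (s \<otimes> c)
        \<in> carrier (localization (T\<lparr>carrier := R\<rparr>) V)"
      unfolding sub_carrier_localization_iff using ac sc by blast
    ultimately show "P \<in> loc_nat_map T W ` carrier (localization (T\<lparr>carrier := R\<rparr>) V)"
      by blast
  qed
qed

lemma loc_nat_map_ring_iso:
  "loc_nat_map T W \<in> ring_iso (localization (T\<lparr>carrier := R\<rparr>) V) (localization T W)"
  unfolding ring_iso_def bij_betw_def
  using loc_nat_map_ring_hom loc_nat_map_inj_on loc_nat_map_surj by blast

end

end

theorem lemma4p4:
  fixes T :: "'a ring" and R I W V :: "'a set"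
  assumes "cring T"
    and "subring R T"
    and "ideal I (T\<lparr>carrier := R\<rparr>)"
    and "genideal T I = I"
    and "mult_closed T W"
    and "V = W \<inter> R"
    and "I \<inter> W \<noteq> {}"
  shows "loc_nat_map T W \<in> ring_iso (localization (T\<lparr>carrier := R\<rparr>) V) (localization T W)"
proof -
  interpret cring T by fact
  have I_subset: "I \<subseteq> R"
    using additive_subgroup.a_subset[OF ideal.axioms(1)[OF assms(3)]] by simp
  have "ideal I T"
    using genideal_ideal[of I] I_subset subringE(1)[OF assms(2)] assms(4) by auto
  then have conductor: "I \<subseteq> conductor T R"
    using ideal_subset_conductor I_subset by blast
  have "mult_closed (T\<lparr>carrier := R\<rparr>) V"
    using assms(5,6) subringE(3,6)[OF assms(2)] unfolding mult_closed_def by auto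
  then interpret ring_extension_localization T R W V
    using assms(2,5,6)
    by (intro ring_extension_localization.intro[OF assms(1)] ring_extension_localization_axioms.intro)
      auto
  obtain c where "c \<in> I" "c \<in> W" using assms(7) by blast
  then show ?thesis
    using loc_nat_map_ring_iso[OF assms(6)] conductor by blast
qed

end
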